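(* Let $(Y,\mathfrak{T},\mathcal{P})$ be a primal fuzzy topological space. Then the map $Cl^\diamond:\mathbb{I}^Y\to\mathbb{I}^Y$, $Cl^\diamond(\mu)=\mu\cup\mu^\diamond$, is a Kuratowski fuzzy closure operator, i.e. for all $\mu,\nu\in\mathbb{I}^Y$: $Cl^\diamond(0_Y)=0_Y$, $\mu\subseteq Cl^\diamond(\mu)$, $Cl^\diamond(\mu\cup\nu)=Cl^\diamond(\mu)\cup Cl^\diamond(\nu)$, and $Cl^\diamond(Cl^\diamond(\mu))=Cl^\diamond(\mu)$.
   Context: Let $Y$ be a nonempty set and $\mathbb{I}=[0,1]$. A fuzzy set in $Y$ is a map $Y\to\mathbb{I}$; $\mathbb{I}^Y$ is the set of all fuzzy sets; $0_Y,1_Y$ are the constant maps with values $0,1$; $\mu\subseteq\nu$ means $\mu(y)\le\nu(y)$ for all $y$; unions/intersections are pointwise sup/inf; $\bar\mu=1_Y-\mu$. For $\mu,\nu\in\mathbb{I}^Y$, $(\mu\oplus\nu)(y)=\min(\mu(y)+\nu(y),1)$. A fuzzy point $y_t$ ($y\in Y$, $t\in(0,1]$) is the fuzzy set with value $t$ at $y$ and $0$ elsewhere; $y_t\in\mu$ means $t\le\mu(y)$. We write $y_t\prec\mu$ if $t+\mu(y)>1$. A set $F$ of fuzzy points is identified with the fuzzy set $y\mapsto\sup\{t: y_t\in F\}$ (with $\sup\emptyset=0$). A fuzzy topology on $Y$ is a family $\mathfrak{T}\subseteq\mathbb{I}^Y$ containing $0_Y,1_Y$ and closed under finite intersections and arbitrary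 unions. For a fuzzy point $y_t$, $\mathcal{Q}(y_t)=\{\mu\in\mathfrak{T}: y_t\prec\mu\}$. A fuzzy primal on $Y$ is a family $\mathcal{P}\subseteq\mathbb{I}^Y$ such that: (i) $1_Y\notin\mathcal{P}$; (ii) if $\mu\in\mathcal{P}$ and $\nu\subseteq\mu$ then $\nu\in\mathcal{P}$; (iii) if $\mu\cap\nu\in\mathcal{P}$ then $\mu\in\mathcal{P}$ or $\nu\in\mathcal{P}$. A primal fuzzy topological space is a triple $(Y,\mathfrak{T},\mathcal{P})$ with $\mathfrak{T}$ a fuzzy topology and $\mathcal{P}$ a fuzzy primal on $Y$. For $\lambda\in\mathbb{I}^Y$, $\lambda^\diamond$ is the set of fuzzy points $y_t$ such that $\bar{\lambda}\oplus\bar{\mu}\in\mathcal{P}$ for every $\mu\in\mathcal{Q}(y_t)$. *)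

theory Defs
  imports Main "HOL.Real"
begin

text \<open>The ground set Y is the (nonempty) type 'a. Fuzzy sets are maps 'a \<Rightarrow> real with values in [0,1].\<close>

definition fuzzy_sets :: "('a \<Rightarrow> real) set" where
  "fuzzy_sets = {\<mu>. \<forall>y. 0 \<le> \<mu> y \<and> \<mu> y \<le> 1}"

definition fzero :: "'a \<Rightarrow> real" where "fzero = (\<lambda>y. 0)"
definition fone :: "'a \<Rightarrow> real" where "fone = (\<lambda>y. 1)"

definition fsubset :: "('a \<Rightarrow> real) \<Rightarrow> ('a \<Rightarrow> real) \<Rightarrow> bool" where
  "fsubset \<mu> \<nu> \<longleftrightarrow> (\<forall>y. \<mu> y \<le> \<nu> y)"

definition funion :: "('a \<Rightarrow> real) \<Rightarrow> ('a \<Rightarrow> real) \<Rightarrow> ('a \<Rightarrow> real)" where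
  "funion \<mu> \<nu> = (\<lambda>y. max (\<mu> y) (\<nu> y))"

definition finter :: "('a \<Rightarrow> real) \<Rightarrow> ('a \<Rightarrow> real) \<Rightarrow> ('a \<Rightarrow> real)" where
  "finter \<mu> \<nu> = (\<lambda>y. min (\<mu> y) (\<nu> y))"

definition rsup :: "real set \<Rightarrow> real" where
  "rsup S = (if S = {} then 0 else Sup S)"

definition fUnion :: "('a \<Rightarrow> real) set \<Rightarrow> ('a \<Rightarrow> real)" where
  "fUnion F = (\<lambda>y. rsup ((\<lambda>\<mu>. \<mu> y) ` F))"

definition fcompl :: "('a \<Rightarrow> real) \<Rightarrow> ('a \<Rightarrow> real)" where
  "fcompl \<mu> = (\<lambda>y. 1 - \<mu> y)"

definition foplus :: "('a \<Rightarrow> real) \<Rightarrow> ('a \<Rightarrow> real) \<Rightarrow> ('a \<Rightarrow> real)" where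
  "foplus \<mu> \<nu> = (\<lambda>y. min (\<mu> y + \<nu> y) 1)"

definition fuzzy_topology :: "('a \<Rightarrow> real) set \<Rightarrow> bool" where
  "fuzzy_topology T \<longleftrightarrow>
     T \<subseteq> fuzzy_sets \<and> fzero \<in> T \<and> fone \<in> T \<and>
     (\<forall>\<mu>\<in>T. \<forall>\<nu>\<in>T. finter \<mu> \<nu> \<in> T) \<and>
     (\<forall>F. F \<subseteq> T \<longrightarrow> fUnion F \<in> T)"

definition fuzzy_primal :: "('a \<Rightarrow> real) set \<Rightarrow> bool" where
  "fuzzy_primal P \<longleftrightarrow>
     P \<subseteq> fuzzy_sets \<and> fone \<notin> P \<and>
     (\<forall>\<mu>\<in>P. \<forall>\<nu>\<in>fuzzy_sets. fsubset \<nu> \<mu> \<longrightarrow> \<nu> \<in> P) \<and>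
     (\<forall>\<mu>\<in>fuzzy_sets. \<forall>\<nu>\<in>fuzzy_sets. finter \<mu> \<nu> \<in> P \<longrightarrow> \<mu> \<in> P \<or> \<nu> \<in> P)"

text \<open>Q-neighbourhoods of the fuzzy point y_t: open sets \<mu> with y_t quasi-coincident with \<mu>.\<close>
definition Qnbhd :: "('a \<Rightarrow> real) set \<Rightarrow> 'a \<Rightarrow> real \<Rightarrow> ('a \<Rightarrow> real) set" where
  "Qnbhd T y t = {\<mu> \<in> T. t + \<mu> y > 1}"

text \<open>\<lambda>^\<diamond>, as a fuzzy set: y \<mapsto> sup of the t in (0,1] with y_t in the set of fuzzy points.\<close>
definition fdiamond :: "('a \<Rightarrow> real) set \<Rightarrow> ('a \<Rightarrow> real) set \<Rightarrow> ('a \<Rightarrow> real) \<Rightarrow> ('a \<Rightarrow> real)" where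
  "fdiamond T P lam = (\<lambda>y. rsup {t. 0 < t \<and> t \<le> 1 \<and>
       (\<forall>\<mu>\<in>Qnbhd T y t. foplus (fcompl lam) (fcompl \<mu>) \<in> P)})"

definition Cl_diamond :: "('a \<Rightarrow> real) set \<Rightarrow> ('a \<Rightarrow> real) set \<Rightarrow> ('a \<Rightarrow> real) \<Rightarrow> ('a \<Rightarrow> real)" where
  "Cl_diamond T P \<mu> = funion \<mu> (fdiamond T P \<mu>)"

end

theory Submission
  imports Defs
begin

text \<open>The union law splits into two halves. Monotonicity of \<open>(-)\<^sup>\<diamond>\<close> gives one inclusion. The other
  follows from primality: if \<open>y\<^sub>t\<close> lies in neither \<open>\<mu>\<^sup>\<diamond>\<close> nor \<open>\<nu>\<^sup>\<diamond>\<close>, take witnessing Q-neighbourhoods;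
  their intersection witnesses \<open>y\<^sub>t \<notin> (\<mu> \<union> \<nu>)\<^sup>\<diamond>\<close>, because
  \<open>\<bar>\<mu> \<union> \<nu>\<bar> \<oplus> \<bar>W\<bar> = (\<bar>\<mu>\<bar> \<oplus> \<bar>W\<bar>) \<inter> (\<bar>\<nu>\<bar> \<oplus> \<bar>W\<bar>)\<close>.
  Idempotency reduces to \<open>\<lambda>\<^sup>\<diamond>\<^sup>\<diamond> \<subseteq> \<lambda>\<^sup>\<diamond>\<close>. The key point is that an open \<open>W\<close> with
  \<open>\<bar>\<lambda>\<bar> \<oplus> \<bar>W\<bar> \<notin> \<P>\<close> is nowhere quasi-coincident with \<open>\<lambda>\<^sup>\<diamond>\<close>. Hence \<open>\<bar>\<lambda>\<^sup>\<diamond>\<bar> \<oplus> \<bar>W\<bar> = 1\<^sub>Y \<notin> \<P>\<close>, so no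
  point in a Q-neighbourhood \<open>W\<close> of that kind belongs to \<open>\<lambda>\<^sup>\<diamond>\<^sup>\<diamond>\<close>.\<close>

lemma rsup_upper: "bdd_above S \<Longrightarrow> t \<in> S \<Longrightarrow> t \<le> rsup S"
  by (auto simp: rsup_def intro: cSup_upper)

lemma rsup_least: "0 \<le> b \<Longrightarrow> (\<And>t. t \<in> S \<Longrightarrow> t \<le> b) \<Longrightarrow> rsup S \<le> b"
  by (auto simp: rsup_def intro: cSup_least)

lemma rsup_nonneg:
  assumes "bdd_above S" "\<And>t. t \<in> S \<Longrightarrow> 0 \<le> t"
  shows "0 \<le> rsup S"
  using assms by (cases "S = {}") (auto simp: rsup_def intro: order_trans[OF _ cSup_upper])

lemma less_rsup_iff:
  assumes "bdd_above S" "0 \<le> s"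
  shows "s < rsup S \<longleftrightarrow> (\<exists>t\<in>S. s < t)"
  using assms by (auto simp: rsup_def less_cSup_iff)

lemma rsup_Un:
  assumes "bdd_above A" "bdd_above B" "\<And>t. t \<in> A \<Longrightarrow> 0 \<le> t" "\<And>t. t \<in> B \<Longrightarrow> 0 \<le> t"
  shows "rsup (A \<union> B) = max (rsup A) (rsup B)"
proof -
  have "0 \<le> rsup A" "0 \<le> rsup B"
    using assms by (auto intro: rsup_nonneg)
  then show ?thesis
    using assms(1,2) cSup_union_distrib[of A B]
    by (cases "A = {}"; cases "B = {}") (auto simp: rsup_def sup_max)
qed

lemma fuzzy_sets_iff: "\<mu> \<in> fuzzy_sets \<longleftrightarrow> (\<forall>y. 0 \<le> \<mu> y \<and> \<mu> y \<le> 1)"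
  by (simp add: fuzzy_sets_def)

lemma foplus_fcompl_in_fuzzy_sets:
  "\<mu> \<in> fuzzy_sets \<Longrightarrow> \<nu> \<in> fuzzy_sets \<Longrightarrow> foplus (fcompl \<mu>) (fcompl \<nu>) \<in> fuzzy_sets"
  unfolding fuzzy_sets_iff foplus_def fcompl_def by (smt (verit))

lemma foplus_fcompl_eq_fone:
  assumes "\<And>y. \<mu> y + \<nu> y \<le> 1"
  shows "foplus (fcompl \<mu>) (fcompl \<nu>) = fone"
proof
  fix y
  show "foplus (fcompl \<mu>) (fcompl \<nu>) y = fone y"
    using assms[of y] by (simp add: foplus_def fcompl_def fone_def)
qed

lemma open_in_fuzzy_sets: "fuzzy_topology T \<Longrightarrow> W \<in> T \<Longrightarrow> W \<in> fuzzy_sets"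
  by (auto simp: fuzzy_topology_def)

lemma Qnbhd_in_fuzzy_sets: "fuzzy_topology T \<Longrightarrow> W \<in> Qnbhd T y t \<Longrightarrow> W \<in> fuzzy_sets"
  by (auto simp: Qnbhd_def fuzzy_topology_def)

lemma fone_in_Qnbhd: "fuzzy_topology T \<Longrightarrow> 0 < t \<Longrightarrow> fone \<in> Qnbhd T y t"
  by (auto simp: fuzzy_topology_def Qnbhd_def fone_def)

lemma finter_in_Qnbhd:
  "fuzzy_topology T \<Longrightarrow> V \<in> Qnbhd T y t \<Longrightarrow> W \<in> Qnbhd T y t \<Longrightarrow> finter V W \<in> Qnbhd T y t"
  by (auto simp: fuzzy_topology_def Qnbhd_def finter_def)

lemma Qnbhd_mono: "W \<in> Qnbhd T y s \<Longrightarrow> s \<le> t \<Longrightarrow> W \<in> Qnbhd T y t"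
  by (auto simp: Qnbhd_def)

lemma fone_notin_primal: "fuzzy_primal P \<Longrightarrow> fone \<notin> P"
  by (simp add: fuzzy_primal_def)

lemma primal_downward_closed:
  "fuzzy_primal P \<Longrightarrow> \<mu> \<in> P \<Longrightarrow> \<nu> \<in> fuzzy_sets \<Longrightarrow> fsubset \<nu> \<mu> \<Longrightarrow> \<nu> \<in> P"
  by (auto simp: fuzzy_primal_def)

lemma primal_finter_cases:
  "fuzzy_primal P \<Longrightarrow> \<mu> \<in> fuzzy_sets \<Longrightarrow> \<nu> \<in> fuzzy_sets \<Longrightarrow> finter \<mu> \<nu> \<in> P \<Longrightarrow> \<mu> \<in> P \<or> \<nu> \<in> P"
  by (auto simp: fuzzy_primal_def)

definition diamond_levels :: "('a \<Rightarrow> real) set \<Rightarrow> ('a \<Rightarrow> real) set \<Rightarrow> ('a \<Rightarrow> real) \<Rightarrow> 'a \<Rightarrow> real set" where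
  "diamond_levels T P lam y =
     {t. 0 < t \<and> t \<le> 1 \<and> (\<forall>W\<in>Qnbhd T y t. foplus (fcompl lam) (fcompl W) \<in> P)}"

lemma fdiamond_eq_rsup: "fdiamond T P lam y = rsup (diamond_levels T P lam y)"
  by (simp add: fdiamond_def diamond_levels_def)

lemma bdd_above_diamond_levels: "bdd_above (diamond_levels T P lam y)"
  by (auto simp: diamond_levels_def intro!: bdd_aboveI[of _ 1])

lemma diamond_levels_nonneg: "t \<in> diamond_levels T P lam y \<Longrightarrow> 0 \<le> t"
  by (simp add: diamond_levels_def)

lemma fdiamond_in_fuzzy_sets: "fdiamond T P lam \<in> fuzzy_sets"
  unfolding fuzzy_sets_iff fdiamond_eq_rsup
  by (auto simp: bdd_above_diamond_levels diamond_levels_def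
      intro: rsup_nonneg rsup_least)

lemma fdiamond_fzero:
  assumes T: "fuzzy_topology T" and P: "fuzzy_primal P"
  shows "fdiamond T P fzero = fzero"
proof -
  have "foplus (fcompl fzero) (fcompl fone) = (fone :: 'a \<Rightarrow> real)"
    by (simp add: fun_eq_iff foplus_def fcompl_def fzero_def fone_def)
  then have "diamond_levels T P fzero y = {}" for y :: 'a
    using fone_in_Qnbhd[OF T] fone_notin_primal[OF P] by (fastforce simp: diamond_levels_def)
  then show ?thesis
    by (simp add: fun_eq_iff fdiamond_eq_rsup rsup_def fzero_def)
qed

lemma diamond_levels_mono:
  assumes T: "fuzzy_topology T" and P: "fuzzy_primal P"
    and "\<nu> \<in> fuzzy_sets" and "fsubset \<mu> \<nu>"
  shows "diamond_levels T P \<mu> y \<subseteq> diamond_levels T P \<nu> y"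
proof
  fix t assume t: "t \<in> diamond_levels T P \<mu> y"
  have "foplus (fcompl \<nu>) (fcompl W) \<in> P" if W: "W \<in> Qnbhd T y t" for W
  proof (rule primal_downward_closed[OF P])
    show "foplus (fcompl \<mu>) (fcompl W) \<in> P"
      using t W by (simp add: diamond_levels_def)
    show "foplus (fcompl \<nu>) (fcompl W) \<in> fuzzy_sets"
      using assms(3) Qnbhd_in_fuzzy_sets[OF T W] by (rule foplus_fcompl_in_fuzzy_sets)
    show "fsubset (foplus (fcompl \<nu>) (fcompl W)) (foplus (fcompl \<mu>) (fcompl W))"
      using assms(4) unfolding fsubset_def foplus_def fcompl_def by (smt (verit))
  qed
  then show "t \<in> diamond_levels T P \<nu> y"
    using t by (simp add: diamond_levels_def)
qed

lemma diamond_levels_funion_subset: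
  assumes T: "fuzzy_topology T" and P: "fuzzy_primal P"
    and \<mu>: "\<mu> \<in> fuzzy_sets" and \<nu>: "\<nu> \<in> fuzzy_sets"
  shows "diamond_levels T P (funion \<mu> \<nu>) y \<subseteq> diamond_levels T P \<mu> y \<union> diamond_levels T P \<nu> y"
proof
  fix t assume t: "t \<in> diamond_levels T P (funion \<mu> \<nu>) y"
  show "t \<in> diamond_levels T P \<mu> y \<union> diamond_levels T P \<nu> y"
  proof (rule ccontr)
    assume "\<not> ?thesis"
    then obtain V W where V: "V \<in> Qnbhd T y t" "foplus (fcompl \<mu>) (fcompl V) \<notin> P"
      and W: "W \<in> Qnbhd T y t" "foplus (fcompl \<nu>) (fcompl W) \<notin> P"
      using t by (auto simp: diamond_levels_def)
    let ?U = "finter V W"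
    have U: "?U \<in> Qnbhd T y t"
      using T V(1) W(1) by (rule finter_in_Qnbhd)
    have U_fs: "?U \<in> fuzzy_sets"
      using Qnbhd_in_fuzzy_sets[OF T U] .
    have "foplus (fcompl (funion \<mu> \<nu>)) (fcompl ?U) =
        finter (foplus (fcompl \<mu>) (fcompl ?U)) (foplus (fcompl \<nu>) (fcompl ?U))"
      by (auto simp: fun_eq_iff foplus_def fcompl_def funion_def finter_def min_def max_def)
    moreover have "foplus (fcompl (funion \<mu> \<nu>)) (fcompl ?U) \<in> P"
      using t U by (simp add: diamond_levels_def)
    ultimately have "foplus (fcompl \<mu>) (fcompl ?U) \<in> P \<or> foplus (fcompl \<nu>) (fcompl ?U) \<in> P"
      using primal_finter_cases[OF P] foplus_fcompl_in_fuzzy_sets[OF _ U_fs] \<mu> \<nu> by metis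
    then show False
    proof
      assume "foplus (fcompl \<mu>) (fcompl ?U) \<in> P"
      moreover have "fsubset (foplus (fcompl \<mu>) (fcompl V)) (foplus (fcompl \<mu>) (fcompl ?U))"
        by (auto simp: fsubset_def foplus_def fcompl_def finter_def)
      ultimately have "foplus (fcompl \<mu>) (fcompl V) \<in> P"
        using primal_downward_closed[OF P] foplus_fcompl_in_fuzzy_sets[OF \<mu> Qnbhd_in_fuzzy_sets[OF T V(1)]]
        by blast
      then show False using V(2) by contradiction
    next
      assume "foplus (fcompl \<nu>) (fcompl ?U) \<in> P"
      moreover have "fsubset (foplus (fcompl \<nu>) (fcompl W)) (foplus (fcompl \<nu>) (fcompl ?U))"
        by (auto simp: fsubset_def foplus_def fcompl_def finter_def)
      ultimately have "foplus (fcompl \<nu>) (fcompl W) \<in> P"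
        using primal_downward_closed[OF P] foplus_fcompl_in_fuzzy_sets[OF \<nu> Qnbhd_in_fuzzy_sets[OF T W(1)]]
        by blast
      then show False using W(2) by contradiction
    qed
  qed
qed

lemma fdiamond_funion:
  assumes T: "fuzzy_topology T" and P: "fuzzy_primal P"
    and \<mu>: "\<mu> \<in> fuzzy_sets" and \<nu>: "\<nu> \<in> fuzzy_sets"
  shows "fdiamond T P (funion \<mu> \<nu>) = funion (fdiamond T P \<mu>) (fdiamond T P \<nu>)"
proof -
  have union_fs: "funion \<mu> \<nu> \<in> fuzzy_sets"
    using \<mu> \<nu> by (auto simp: fuzzy_sets_iff funion_def le_max_iff_disj)
  have "diamond_levels T P \<mu> y \<subseteq> diamond_levels T P (funion \<mu> \<nu>) y" for y
    by (rule diamond_levels_mono[OF T P union_fs]) (simp add: fsubset_def funion_def)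
  moreover have "diamond_levels T P \<nu> y \<subseteq> diamond_levels T P (funion \<mu> \<nu>) y" for y
    by (rule diamond_levels_mono[OF T P union_fs]) (simp add: fsubset_def funion_def)
  ultimately
  have "diamond_levels T P (funion \<mu> \<nu>) y = diamond_levels T P \<mu> y \<union> diamond_levels T P \<nu> y"
    for y
    using diamond_levels_funion_subset[OF assms] by blast
  then show ?thesis
    by (simp add: fun_eq_iff fdiamond_eq_rsup funion_def rsup_Un bdd_above_diamond_levels diamond_levels_nonneg)
qed

lemma fdiamond_not_quasi_coincident:
  assumes T: "fuzzy_topology T" and "W \<in> T"
    and notin: "foplus (fcompl lam) (fcompl W) \<notin> P"
  shows "fdiamond T P lam z + W z \<le> 1"
proof (rule ccontr)
  assume "\<not> ?thesis"
  then have "1 - W z < rsup (diamond_levels T P lam z)"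
    by (simp add: fdiamond_eq_rsup)
  moreover have "0 \<le> 1 - W z"
    using open_in_fuzzy_sets[OF assms(1,2)] by (simp add: fuzzy_sets_iff)
  ultimately have "\<exists>s\<in>diamond_levels T P lam z. 1 - W z < s"
    by (simp add: less_rsup_iff bdd_above_diamond_levels)
  then obtain s where s: "s \<in> diamond_levels T P lam z" "1 - W z < s"
    by blast
  then have "W \<in> Qnbhd T z s"
    using \<open>W \<in> T\<close> by (simp add: Qnbhd_def)
  then show False
    using s(1) notin by (simp add: diamond_levels_def)
qed

lemma fdiamond_fdiamond_le:
  assumes T: "fuzzy_topology T" and P: "fuzzy_primal P"
  shows "fdiamond T P (fdiamond T P lam) y \<le> fdiamond T P lam y"
proof -
  let ?D = "fdiamond T P lam"
  have "t \<le> ?D y" if t: "t \<in> diamond_levels T P ?D y" for t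
  proof (rule ccontr)
    assume "\<not> t \<le> ?D y"
    \<comment> \<open>\<open>y\<^sub>s \<notin> \<lambda>\<^sup>\<diamond>\<close>, and a witness for this is also a Q-neighbourhood of \<open>y\<^sub>t\<close>\<close>
    define s where "s = (?D y + t) / 2"
    have "0 \<le> ?D y"
      using fdiamond_in_fuzzy_sets[of T P lam] by (simp add: fuzzy_sets_iff)
    with \<open>\<not> t \<le> ?D y\<close> t have s: "?D y < s" "s < t" "0 < s" "s \<le> 1"
      by (auto simp: s_def diamond_levels_def)
    then have "s \<notin> diamond_levels T P lam y"
      using rsup_upper[OF bdd_above_diamond_levels] by (fastforce simp: fdiamond_eq_rsup)
    then obtain W where W: "W \<in> Qnbhd T y s" "foplus (fcompl lam) (fcompl W) \<notin> P"
      using s by (auto simp: diamond_levels_def)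
    have "foplus (fcompl ?D) (fcompl W) \<in> P"
      using t Qnbhd_mono[OF W(1) less_imp_le[OF s(2)]] by (simp add: diamond_levels_def)
    moreover have "foplus (fcompl ?D) (fcompl W) = fone"
      using fdiamond_not_quasi_coincident[OF T _ W(2)] W(1)
      by (intro foplus_fcompl_eq_fone) (simp add: Qnbhd_def)
    ultimately show False
      using fone_notin_primal[OF P] by simp
  qed
  then show ?thesis
    using fdiamond_in_fuzzy_sets[of T P lam]
    by (auto simp: fdiamond_eq_rsup[of T P ?D] fuzzy_sets_iff intro!: rsup_least)
qed

lemma Cl_diamond_in_fuzzy_sets: "\<mu> \<in> fuzzy_sets \<Longrightarrow> Cl_diamond T P \<mu> \<in> fuzzy_sets"
  using fdiamond_in_fuzzy_sets[of T P \<mu>]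
  by (auto simp: Cl_diamond_def fuzzy_sets_iff funion_def le_max_iff_disj)

lemma Cl_diamond_fzero:
  assumes "fuzzy_topology T" "fuzzy_primal P"
  shows "Cl_diamond T P fzero = fzero"
  unfolding Cl_diamond_def fdiamond_fzero[OF assms] by (simp add: fun_eq_iff funion_def fzero_def)

lemma fsubset_Cl_diamond: "fsubset \<mu> (Cl_diamond T P \<mu>)"
  by (simp add: fsubset_def Cl_diamond_def funion_def)

lemma Cl_diamond_funion:
  assumes "fuzzy_topology T" "fuzzy_primal P" "\<mu> \<in> fuzzy_sets" "\<nu> \<in> fuzzy_sets"
  shows "Cl_diamond T P (funion \<mu> \<nu>) = funion (Cl_diamond T P \<mu>) (Cl_diamond T P \<nu>)"
  unfolding Cl_diamond_def fdiamond_funion[OF assms]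
  by (simp add: fun_eq_iff funion_def max.assoc max.left_commute max.commute)

lemma Cl_diamond_idem:
  assumes T: "fuzzy_topology T" and P: "fuzzy_primal P" and \<mu>: "\<mu> \<in> fuzzy_sets"
  shows "Cl_diamond T P (Cl_diamond T P \<mu>) = Cl_diamond T P \<mu>"
proof -
  have "fdiamond T P (Cl_diamond T P \<mu>) = funion (fdiamond T P \<mu>) (fdiamond T P (fdiamond T P \<mu>))"
    unfolding Cl_diamond_def using T P \<mu> fdiamond_in_fuzzy_sets by (rule fdiamond_funion)
  then have unfold_twice: "Cl_diamond T P (Cl_diamond T P \<mu>) y =
      max (max (\<mu> y) (fdiamond T P \<mu> y)) (max (fdiamond T P \<mu> y) (fdiamond T P (fdiamond T P \<mu>) y))"
    for y by (simp add: Cl_diamond_def funion_def)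
  have unfold_once: "Cl_diamond T P \<mu> y = max (\<mu> y) (fdiamond T P \<mu> y)" for y
    by (simp add: Cl_diamond_def funion_def)
  show ?thesis
  proof
    fix y
    show "Cl_diamond T P (Cl_diamond T P \<mu>) y = Cl_diamond T P \<mu> y"
      unfolding unfold_twice unfold_once using fdiamond_fdiamond_le[OF T P, of \<mu> y]
      by (simp add: max_def)
  qed
qed

theorem theorem4p5:
  fixes T P :: "('a \<Rightarrow> real) set"
  assumes "fuzzy_topology T" and "fuzzy_primal P"
  shows "(\<forall>\<mu>\<in>fuzzy_sets. Cl_diamond T P \<mu> \<in> fuzzy_sets) \<and>
         Cl_diamond T P fzero = fzero \<and>
         (\<forall>\<mu>\<in>fuzzy_sets. fsubset \<mu> (Cl_diamond T P \<mu>)) \<and>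
         (\<forall>\<mu>\<in>fuzzy_sets. \<forall>\<nu>\<in>fuzzy_sets.
            Cl_diamond T P (funion \<mu> \<nu>) = funion (Cl_diamond T P \<mu>) (Cl_diamond T P \<nu>)) \<and>
         (\<forall>\<mu>\<in>fuzzy_sets. Cl_diamond T P (Cl_diamond T P \<mu>) = Cl_diamond T P \<mu>)"
  using assms
  by (simp add: Cl_diamond_in_fuzzy_sets Cl_diamond_fzero fsubset_Cl_diamond
      Cl_diamond_funion Cl_diamond_idem)

end
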